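(* Consider a transient MDP with a sink state as in the context. For each $\pi\in\Pi_{\mathrm{SD}}$ and $t\in\mathbb N$: \[ \lim_{\beta\to0}g_t(\pi,\beta)=g_t(\pi,0),\quad \lim_{\beta\to0}g^\star_t(\beta)=g^\star_t(0),\quad \lim_{\beta\to0}g_\infty(\pi,\beta)=g_\infty(\pi,0),\quad \lim_{\beta\to0}g^\star_\infty(\beta)=g^\star_\infty(0), \] where $\beta\to0$ from above.
   Context: MDP: states $\mathcal S=\{1,\dots,S\}$ plus sink state $e$ ($p(e,a,e)=1$, $r(e,a,e)=0$); finite actions; transitions $p(s,a,s')$, real rewards $r(s,a,s')$ of arbitrary sign; initial distribution $\mu$ on $\mathcal S$ with $\mu>0$. Transience: for every stationary deterministic policy $\pi$, $\sum_{t\ge0}\mathbb P^{\pi,s}[\tilde s_t=s']<\infty$ for all $s,s'\in\mathcal S$. $\Pi_{\mathrm{SD}}$ stationary deterministic, $\Pi_{\mathrm{HR}}$ history-dependent randomized policies. $\mathrm{ERM}_\beta[\tilde x]=-\beta^{-1}\log\mathbb E e^{-\beta\tilde x}$ for $\beta>0$ and $\mathrm{ERM}_0=\mathbb E$. $g_t(\pi,\beta)=\mathrm{ERM}^{\pi,\mu}_\beta[\sum_{k=0}^t r(\tilde s_k,\tilde a_k,\tilde s_{k+1})]$, $g^\star_t(\beta)=\sup_{\pi\in\Pi_{\mathrm{HR}}}g_t(\pi,\beta)$, $g_\infty(\pi,\beta)=\liminf_t g_t(\pi,\beta)$, $g^\star_\infty(\beta)=\liminf_t g^\star_t(\beta)$.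 *)

theory Defs
  imports "HOL-Probability.Probability"
begin

text \<open>States: a finite type 's containing the sink state e
 (the non-sink states play the role of {1..S}); actions: a finite type 'a.
 Transition kernel p s a :: 's pmf (so p(s,a,s') = pmf (p s a) s'),
 rewards r s a s' :: real, initial distribution mu :: 's pmf.
 A history-dependent randomized policy maps the history
 [(s_0,a_0),...,(s_{k-1},a_{k-1})] and the current state s_k to a
 distribution over actions.\<close>

type_synonym ('s, 'a) hr_policy = "('s \<times> 'a) list \<Rightarrow> 's \<Rightarrow> 'a pmf"

definition sd_policy :: "('s \<Rightarrow> 'a) \<Rightarrow> ('s, 'a) hr_policy" where
  "sd_policy d = (\<lambda>h s. return_pmf (d s))"

text \<open>traj p mu pol n: joint law of ([(s_0,a_0),...,(s_{n-1},a_{n-1})], s_n).\<close>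
fun traj :: "('s \<Rightarrow> 'a \<Rightarrow> 's pmf) \<Rightarrow> 's pmf \<Rightarrow> ('s, 'a) hr_policy \<Rightarrow> nat
              \<Rightarrow> (('s \<times> 'a) list \<times> 's) pmf" where
  "traj p mu pol 0 = map_pmf (\<lambda>s. ([], s)) mu"
| "traj p mu pol (Suc n) = bind_pmf (traj p mu pol n)
     (\<lambda>(h, s). bind_pmf (pol h s) (\<lambda>a. map_pmf (\<lambda>s'. (h @ [(s, a)], s')) (p s a)))"

fun ret :: "('s \<Rightarrow> 'a \<Rightarrow> 's \<Rightarrow> real) \<Rightarrow> ('s \<times> 'a) list \<Rightarrow> 's \<Rightarrow> real" where
  "ret r [] s' = 0"
| "ret r [(s, a)] s' = r s a s'"
| "ret r ((s, a) # (s2, a2) # h) s' = r s a s2 + ret r ((s2, a2) # h) s'"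

definition ERM :: "real \<Rightarrow> real pmf \<Rightarrow> real" where
  "ERM \<beta> X = (if \<beta> = 0 then measure_pmf.expectation X (\<lambda>x. x)
              else - (1 / \<beta>) * ln (measure_pmf.expectation X (\<lambda>x. exp (- \<beta> * x))))"

text \<open>g_t(pol,beta) = ERM_beta[ sum_{k=0}^t r(s_k,a_k,s_{k+1}) ].\<close>
definition g :: "('s \<Rightarrow> 'a \<Rightarrow> 's pmf) \<Rightarrow> ('s \<Rightarrow> 'a \<Rightarrow> 's \<Rightarrow> real) \<Rightarrow> 's pmf
                 \<Rightarrow> nat \<Rightarrow> ('s, 'a) hr_policy \<Rightarrow> real \<Rightarrow> real" where
  "g p r mu t pol \<beta> = ERM \<beta> (map_pmf (\<lambda>(h, s). ret r h s) (traj p mu pol (Suc t)))"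

definition g_star :: "('s \<Rightarrow> 'a \<Rightarrow> 's pmf) \<Rightarrow> ('s \<Rightarrow> 'a \<Rightarrow> 's \<Rightarrow> real) \<Rightarrow> 's pmf
                 \<Rightarrow> nat \<Rightarrow> real \<Rightarrow> real" where
  "g_star p r mu t \<beta> = (SUP pol \<in> (UNIV :: ('s, 'a) hr_policy set). g p r mu t pol \<beta>)"

definition g_inf :: "('s \<Rightarrow> 'a \<Rightarrow> 's pmf) \<Rightarrow> ('s \<Rightarrow> 'a \<Rightarrow> 's \<Rightarrow> real) \<Rightarrow> 's pmf
                 \<Rightarrow> ('s, 'a) hr_policy \<Rightarrow> real \<Rightarrow> ereal" where
  "g_inf p r mu pol \<beta> = liminf (\<lambda>t. ereal (g p r mu t pol \<beta>))"

definition g_star_inf :: "('s \<Rightarrow> 'a \<Rightarrow> 's pmf) \<Rightarrow> ('s \<Rightarrow> 'a \<Rightarrow> 's \<Rightarrow> real) \<Rightarrow> 's pmf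
                 \<Rightarrow> real \<Rightarrow> ereal" where
  "g_star_inf p r mu \<beta> = liminf (\<lambda>t. ereal (g_star p r mu t \<beta>))"

end

theory Submission
  imports Defs
begin

text \<open>Let \<open>N\<close> be the number of steps a trajectory spends outside the sink \<open>e\<close>. Since \<open>e\<close>
  is absorbing and earns nothing, the return \<open>Y\<close> satisfies \<open>|Y| \<le> R N\<close>. Transience means
  that no nonempty set of non-sink states can be kept forever by a stationary policy; as there
  are finitely many states, there is a horizon \<open>K\<close> such that from every state and under every
  history-dependent policy the sink is reached within \<open>K\<close> steps with probability at least
  \<open>\<delta>^K\<close>, where \<open>\<delta>\<close> is the least positive transition probability. Hence the survival
  probability decays geometrically, uniformly in the policy and the initial distribution, and
  \<open>E[l^N]\<close> is uniformly bounded for some \<open>l > 1\<close>. The elementary bounds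
  \<open>E Y - \<beta> E[Y\<^sup>2 exp(\<beta>|Y|)] \<le> ERM\<^sub>\<beta> Y \<le> E Y\<close> then give
  \<open>g\<^sub>t(\<pi>,0) - C\<beta> \<le> g\<^sub>t(\<pi>,\<beta>) \<le> g\<^sub>t(\<pi>,0)\<close> for small \<open>\<beta>\<close>, with \<open>C\<close> independent of \<open>\<pi>\<close>
  and \<open>t\<close>, and such a uniform sandwich survives suprema over policies and the \<open>liminf\<close> over
  horizons.\<close>

section \<open>Real analysis\<close>

lemma exp_le_quadratic: "exp (y::real) \<le> 1 + y + y\<^sup>2 * exp \<bar>y\<bar>"
proof -
  obtain t where "\<bar>t\<bar> \<le> \<bar>y\<bar>" and taylor: "exp y = (\<Sum>m<2. y ^ m / fact m) + exp t / fact 2 * y ^ 2"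
    using Maclaurin_exp_le[of y 2] by blast
  have "exp t \<le> exp \<bar>y\<bar>"
    using \<open>\<bar>t\<bar> \<le> \<bar>y\<bar>\<close> by (simp add: abs_le_iff)
  then have "exp t / 2 \<le> exp \<bar>y\<bar>"
    using exp_gt_zero[of "\<bar>y\<bar>"] by linarith
  then have "exp t / fact 2 \<le> exp \<bar>y\<bar>"
    by (simp add: eval_nat_numeral del: exp_le_cancel_iff)
  then have "exp t / fact 2 * y\<^sup>2 \<le> exp \<bar>y\<bar> * y\<^sup>2"
    by (rule mult_right_mono) simp
  then show ?thesis
    using taylor by (simp add: eval_nat_numeral mult.commute)
qed

lemma power2_le_exp_half:
  assumes "0 \<le> (u::real)"
  shows "u\<^sup>2 \<le> 16 * exp (u / 2)"
proof -
  have "u / 4 \<le> exp (u / 4)"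
    using exp_ge_add_one_self[of "u / 4"] by linarith
  then have "(u / 4) * (u / 4) \<le> exp (u / 4) * exp (u / 4)"
    using assms by (intro mult_mono) auto
  then show ?thesis
    by (simp add: power2_eq_square flip: exp_add)
qed

lemma abs_le_scaled_exp:
  fixes y z R c :: real
  assumes "\<bar>y\<bar> \<le> R * z" "0 \<le> R" "0 < c"
  shows "\<bar>y\<bar> \<le> R / c * exp (c * z)"
proof -
  have "c * z \<le> exp (c * z)"
    using exp_ge_add_one_self[of "c * z"] by linarith
  then have "R * z \<le> R / c * exp (c * z)"
    using assms(2,3) by (simp add: field_simps mult_left_mono)
  with assms(1) show ?thesis by linarith
qed

lemma square_mult_exp_le_scaled_exp:
  fixes y z R c \<beta> :: real
  assumes "\<bar>y\<bar> \<le> R * z" "0 \<le> z" "0 < R" "0 < c" "0 \<le> \<beta>" "\<beta> * R \<le> c / 2"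
  shows "y\<^sup>2 * exp (\<beta> * \<bar>y\<bar>) \<le> 16 * R\<^sup>2 / c\<^sup>2 * exp (c * z)"
proof -
  have "y\<^sup>2 = \<bar>y\<bar>\<^sup>2"
    by simp
  also have "\<dots> \<le> (R * z)\<^sup>2"
    using assms(1) by (intro power_mono) auto
  also have "\<dots> = R\<^sup>2 / c\<^sup>2 * (c * z)\<^sup>2"
    using assms(4) by (simp add: power_mult_distrib)
  also have "\<dots> \<le> R\<^sup>2 / c\<^sup>2 * (16 * exp (c * z / 2))"
    using assms(2,4) by (intro mult_left_mono power2_le_exp_half) auto
  finally have square: "y\<^sup>2 \<le> 16 * R\<^sup>2 / c\<^sup>2 * exp (c * z / 2)"
    by (simp add: mult_ac)
  have "\<beta> * \<bar>y\<bar> \<le> \<beta> * (R * z)"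
    using assms(1,5) by (rule mult_left_mono)
  also have "\<dots> = (\<beta> * R) * z"
    by (simp only: mult.assoc)
  also have "\<dots> \<le> c / 2 * z"
    using assms(6,2) by (rule mult_right_mono)
  finally have "exp (\<beta> * \<bar>y\<bar>) \<le> exp (c * z / 2)"
    by simp
  with square have "y\<^sup>2 * exp (\<beta> * \<bar>y\<bar>) \<le> 16 * R\<^sup>2 / c\<^sup>2 * exp (c * z / 2) * exp (c * z / 2)"
    by (intro mult_mono) auto
  also have "\<dots> = 16 * R\<^sup>2 / c\<^sup>2 * exp (c * z)"
    by (simp flip: exp_add)
  finally show ?thesis .
qed

lemma finite_positive_lower_bound:
  fixes f :: "'b::finite \<Rightarrow> real"
  shows "\<exists>\<delta>>0. \<delta> < 1 \<and> (\<forall>x. 0 < f x \<longrightarrow> \<delta> \<le> f x)"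
proof -
  define A where "A = insert (1/2) (f ` {x. 0 < f x})"
  have "finite A"
    by (simp add: A_def)
  then have "0 < Min A" "Min A < 1" "\<And>x. 0 < f x \<Longrightarrow> Min A \<le> f x"
    by (auto simp: A_def Min_gr_iff Min_less_iff intro: Min_le)
  then show ?thesis by blast
qed

lemma finite_abs_bound:
  fixes f :: "'b::finite \<Rightarrow> real"
  obtains R where "0 < R" "\<And>x. \<bar>f x\<bar> \<le> R"
proof -
  have le_Max: "\<bar>f x\<bar> \<le> Max (range (\<lambda>x. \<bar>f x\<bar>))" for x
    by (rule Max_ge) auto
  show thesis
  proof
    show "0 < 1 + Max (range (\<lambda>x. \<bar>f x\<bar>))"
      using le_Max[of undefined] abs_ge_zero[of "f undefined"] by linarith
    show "\<bar>f x\<bar> \<le> 1 + Max (range (\<lambda>x. \<bar>f x\<bar>))" for x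
      using le_Max[of x] by linarith
  qed
qed

lemma power_div_le_root_power:
  fixes \<theta> :: real
  assumes "0 < \<theta>" "\<theta> \<le> 1" "0 < K"
  shows "\<theta> ^ (n div K) \<le> 1 / \<theta> * root K \<theta> ^ n"
proof -
  let ?\<rho> = "root K \<theta>"
  have "0 < ?\<rho>" "?\<rho> \<le> 1" and \<rho>K: "?\<rho> ^ K = \<theta>"
    using assms by auto
  have "\<theta> = ?\<rho> ^ K"
    using \<rho>K ..
  also have "\<dots> \<le> ?\<rho> ^ (n mod K)"
    using \<open>0 < ?\<rho>\<close> \<open>?\<rho> \<le> 1\<close> assms(3) by (intro power_decreasing) auto
  finally have "\<theta> ^ (n div K) * \<theta> \<le> \<theta> ^ (n div K) * ?\<rho> ^ (n mod K)"
    using assms(1) by (intro mult_left_mono) auto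
  also have "\<dots> = ?\<rho> ^ (K * (n div K) + n mod K)"
    by (simp only: power_add power_mult \<rho>K)
  also have "\<dots> = ?\<rho> ^ n"
    by simp
  finally show ?thesis
    using assms(1) by (simp add: pos_le_divide_eq)
qed

lemma cSUP_sandwich:
  fixes F G :: "'i \<Rightarrow> real"
  assumes bdd_F: "bdd_above (range F)" and lower: "\<And>i. F i - c \<le> G i" and upper: "\<And>i. G i \<le> F i"
  shows "(SUP i. F i) - c \<le> (SUP i. G i)" and "(SUP i. G i) \<le> (SUP i. F i)"
proof -
  obtain B where "\<And>i. F i \<le> B"
    using bdd_F by (auto simp: bdd_above_def)
  then have bdd_G: "bdd_above (range G)"
    using upper by (intro bdd_aboveI2[of _ _ B]) (meson order_trans)
  have "F i \<le> (SUP i. G i) + c" for i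
    using lower[of i] cSUP_upper[OF UNIV_I bdd_G, of i] by linarith
  then have "(SUP i. F i) \<le> (SUP i. G i) + c"
    by (intro cSUP_least) auto
  then show "(SUP i. F i) - c \<le> (SUP i. G i)"
    by simp
  show "(SUP i. G i) \<le> (SUP i. F i)"
    using bdd_F upper by (intro cSUP_mono) auto
qed

lemma liminf_sandwich:
  fixes F G :: "nat \<Rightarrow> real"
  assumes lower: "\<And>t. F t - c \<le> G t" and upper: "\<And>t. G t \<le> F t"
  shows "liminf (\<lambda>t. ereal (F t)) - ereal c \<le> liminf (\<lambda>t. ereal (G t))"
    and "liminf (\<lambda>t. ereal (G t)) \<le> liminf (\<lambda>t. ereal (F t))"
proof -
  have "liminf (\<lambda>t. ereal (F t)) - ereal c = liminf (\<lambda>t. ereal (F t) + ereal (- c))"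
    by (subst Liminf_add_ereal_right) (simp_all add: minus_ereal_def)
  also have "\<dots> \<le> liminf (\<lambda>t. ereal (G t))"
    using lower by (intro Liminf_mono always_eventually) auto
  finally show "liminf (\<lambda>t. ereal (F t)) - ereal c \<le> liminf (\<lambda>t. ereal (G t))" .
  show "liminf (\<lambda>t. ereal (G t)) \<le> liminf (\<lambda>t. ereal (F t))"
    using upper by (intro Liminf_mono always_eventually) auto
qed

lemma tendsto_at_right_0_sandwich:
  fixes F :: "real \<Rightarrow> ereal"
  assumes "0 < \<beta>\<^sub>0"
    and bounds: "\<And>\<beta>. 0 < \<beta> \<Longrightarrow> \<beta> \<le> \<beta>\<^sub>0 \<Longrightarrow> F 0 - ereal (\<beta> * C) \<le> F \<beta> \<and> F \<beta> \<le> F 0"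
  shows "(F \<longlongrightarrow> F 0) (at_right 0)"
proof (rule tendsto_sandwich)
  have near: "\<forall>\<^sub>F \<beta> in at_right 0. 0 < \<beta> \<and> \<beta> \<le> \<beta>\<^sub>0"
    using eventually_at_right_real[OF \<open>0 < \<beta>\<^sub>0\<close>] by eventually_elim auto
  show "\<forall>\<^sub>F \<beta> in at_right 0. F 0 - ereal (\<beta> * C) \<le> F \<beta>"
    using near by eventually_elim (use bounds in blast)
  show "\<forall>\<^sub>F \<beta> in at_right 0. F \<beta> \<le> F 0"
    using near by eventually_elim (use bounds in blast)
  have "((\<lambda>\<beta>. ereal (\<beta> * C)) \<longlongrightarrow> 0) (at_right 0)"
    using tendsto_ereal[OF tendsto_mult_left_zero[OF tendsto_ident_at, of C]] by (simp add: zero_ereal_def)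
  then show "((\<lambda>\<beta>. F 0 - ereal (\<beta> * C)) \<longlongrightarrow> F 0) (at_right 0)"
    using tendsto_diff_ereal_general[OF tendsto_const, of _ 0 "at_right 0" "F 0"] by simp
qed simp

lemma tendsto_at_right_0_real_sandwich:
  fixes f :: "real \<Rightarrow> real"
  assumes "0 < \<beta>\<^sub>0" and "\<And>\<beta>. 0 < \<beta> \<Longrightarrow> \<beta> \<le> \<beta>\<^sub>0 \<Longrightarrow> f 0 - \<beta> * C \<le> f \<beta> \<and> f \<beta> \<le> f 0"
  shows "(f \<longlongrightarrow> f 0) (at_right 0)"
proof -
  have "((\<lambda>\<beta>. ereal (f \<beta>)) \<longlongrightarrow> ereal (f 0)) (at_right 0)"
    using assms by (intro tendsto_at_right_0_sandwich[where C = C]) auto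
  then show ?thesis
    by simp
qed

lemma liminf_tendsto_at_right_0_sandwich:
  fixes G :: "real \<Rightarrow> nat \<Rightarrow> real"
  assumes "0 < \<beta>\<^sub>0"
    and bounds: "\<And>\<beta> t. 0 < \<beta> \<Longrightarrow> \<beta> \<le> \<beta>\<^sub>0 \<Longrightarrow> G 0 t - \<beta> * C \<le> G \<beta> t \<and> G \<beta> t \<le> G 0 t"
  shows "((\<lambda>\<beta>. liminf (\<lambda>t. ereal (G \<beta> t))) \<longlongrightarrow> liminf (\<lambda>t. ereal (G 0 t))) (at_right 0)"
proof (rule tendsto_at_right_0_sandwich[OF \<open>0 < \<beta>\<^sub>0\<close>])
  fix \<beta> :: real
  assume "0 < \<beta>" "\<beta> \<le> \<beta>\<^sub>0"
  then have "\<And>t. G 0 t - \<beta> * C \<le> G \<beta> t" "\<And>t. G \<beta> t \<le> G 0 t"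
    using bounds by blast+
  then show "liminf (\<lambda>t. ereal (G 0 t)) - ereal (\<beta> * C) \<le> liminf (\<lambda>t. ereal (G \<beta> t))
      \<and> liminf (\<lambda>t. ereal (G \<beta> t)) \<le> liminf (\<lambda>t. ereal (G 0 t))"
    by (intro conjI liminf_sandwich)
qed

section \<open>Entropic risk measure\<close>

lemma expectation_exp_pos:
  fixes f :: "'b \<Rightarrow> real"
  assumes "finite (set_pmf M)"
  shows "0 < measure_pmf.expectation M (\<lambda>x. exp (f x))"
proof -
  have "measure_pmf.expectation M (\<lambda>x. exp (f x)) = (\<Sum>x\<in>set_pmf M. exp (f x) * pmf M x)"
    using assms by (rule integral_measure_pmf_real) simp
  also have "\<dots> > 0"
    using assms set_pmf_not_empty[of M] by (intro sum_pos) (auto simp: pmf_positive)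
  finally show ?thesis .
qed

lemma ERM_le_expectation:
  fixes X :: "real pmf"
  assumes fin: "finite (set_pmf X)" and "0 < \<beta>"
  shows "ERM \<beta> X \<le> measure_pmf.expectation X (\<lambda>x. x)"
proof -
  define m where "m = - \<beta> * measure_pmf.expectation X (\<lambda>x. x)"
  have tangent: "exp m * (1 - m) + (- \<beta> * exp m) * x \<le> exp (- \<beta> * x)" for x
  proof -
    have "exp m * (1 + (- \<beta> * x - m)) \<le> exp m * exp (- \<beta> * x - m)"
      by (simp add: exp_ge_add_one_self)
    then show ?thesis
      by (simp add: algebra_simps flip: exp_add)
  qed
  have "exp m = measure_pmf.expectation X (\<lambda>x. exp m * (1 - m) + (- \<beta> * exp m) * x)"
    by (simp add: integrable_measure_pmf_finite[OF fin] m_def algebra_simps)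
  also have "\<dots> \<le> measure_pmf.expectation X (\<lambda>x. exp (- \<beta> * x))"
    by (intro integral_mono integrable_measure_pmf_finite[OF fin] tangent)
  finally have "m \<le> ln (measure_pmf.expectation X (\<lambda>x. exp (- \<beta> * x)))"
    by (metis exp_gt_zero ln_exp ln_le_cancel_iff order_less_le_trans)
  then show ?thesis
    using \<open>0 < \<beta>\<close> by (simp add: ERM_def m_def field_simps)
qed

lemma expectation_minus_le_ERM:
  fixes X :: "real pmf"
  assumes fin: "finite (set_pmf X)" and "0 < \<beta>"
    and C: "measure_pmf.expectation X (\<lambda>x. x\<^sup>2 * exp (\<beta> * \<bar>x\<bar>)) \<le> C"
  shows "measure_pmf.expectation X (\<lambda>x. x) - \<beta> * C \<le> ERM \<beta> X"
proof -
  define z where "z = - \<beta> * measure_pmf.expectation X (\<lambda>x. x) + \<beta>\<^sup>2 * C"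
  have "exp (- \<beta> * x) \<le> 1 + (- \<beta>) * x + \<beta>\<^sup>2 * (x\<^sup>2 * exp (\<beta> * \<bar>x\<bar>))" for x
    using exp_le_quadratic[of "- \<beta> * x"] \<open>0 < \<beta>\<close> by (simp add: power_mult_distrib abs_mult)
  then have "measure_pmf.expectation X (\<lambda>x. exp (- \<beta> * x))
      \<le> measure_pmf.expectation X (\<lambda>x. 1 + (- \<beta>) * x + \<beta>\<^sup>2 * (x\<^sup>2 * exp (\<beta> * \<bar>x\<bar>)))"
    by (intro integral_mono integrable_measure_pmf_finite[OF fin])
  also have "\<dots> = 1 + (- \<beta>) * measure_pmf.expectation X (\<lambda>x. x)
      + \<beta>\<^sup>2 * measure_pmf.expectation X (\<lambda>x. x\<^sup>2 * exp (\<beta> * \<bar>x\<bar>))"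
    by (simp add: integrable_measure_pmf_finite[OF fin])
  also have "\<dots> \<le> 1 + z"
    unfolding z_def using C by (simp add: mult_left_mono)
  also have "\<dots> \<le> exp z"
    by (rule exp_ge_add_one_self)
  finally have "ln (measure_pmf.expectation X (\<lambda>x. exp (- \<beta> * x))) \<le> z"
    using expectation_exp_pos[OF fin] by (metis ln_exp ln_le_cancel_iff exp_gt_zero)
  then show ?thesis
    using \<open>0 < \<beta>\<close> by (simp add: ERM_def z_def power2_eq_square field_simps)
qed

section \<open>Trajectories\<close>

lemma expectation_bind_pmf_finite:
  fixes f :: "'b \<Rightarrow> real"
  assumes "finite (set_pmf M)" and "\<And>x. x \<in> set_pmf M \<Longrightarrow> finite (set_pmf (N x))"
  shows "measure_pmf.expectation (bind_pmf M N) f =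
         measure_pmf.expectation M (\<lambda>x. measure_pmf.expectation (N x) f)"
  using assms by (simp add: pmf_expectation_bind[OF assms(1) assms(2) order_refl]
      integral_measure_pmf[OF assms(1)])

lemma finite_set_pmf_traj:
  fixes p :: "'s::finite \<Rightarrow> 'a::finite \<Rightarrow> 's pmf"
  shows "finite (set_pmf (traj p mu pol n))"
  by (induction n) (auto simp: split_beta)

lemma length_traj: "x \<in> set_pmf (traj p mu pol n) \<Longrightarrow> length (fst x) = n"
  by (induction n arbitrary: x) (auto simp: split_beta)

lemma expectation_traj_Suc:
  fixes p :: "'s::finite \<Rightarrow> 'a::finite \<Rightarrow> 's pmf" and G :: "('s \<times> 'a) list \<times> 's \<Rightarrow> real"
  shows "measure_pmf.expectation (traj p mu pol (Suc n)) G =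
     measure_pmf.expectation (traj p mu pol n) (\<lambda>(h, s). measure_pmf.expectation (pol h s)
       (\<lambda>a. measure_pmf.expectation (p s a) (\<lambda>s'. G (h @ [(s, a)], s'))))"
  by (auto simp: split_beta expectation_bind_pmf_finite finite_set_pmf_traj
      intro!: Bochner_Integration.integral_cong)

lemma expectation_traj_Suc_state_le:
  fixes p :: "'s::finite \<Rightarrow> 'a::finite \<Rightarrow> 's pmf" and f g :: "'s \<Rightarrow> real"
  assumes "\<And>s a. measure_pmf.expectation (p s a) g \<le> f s"
  shows "measure_pmf.expectation (traj p mu pol (Suc n)) (\<lambda>x. g (snd x))
       \<le> measure_pmf.expectation (traj p mu pol n) (\<lambda>x. f (snd x))"
proof -
  have "measure_pmf.expectation (pol h s) (\<lambda>a. measure_pmf.expectation (p s a) g) \<le> f s" for h s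
    using integral_mono[of "pol h s" _ "\<lambda>_. f s"] assms
    by (simp add: integrable_measure_pmf_finite)
  then show ?thesis
    unfolding expectation_traj_Suc
    by (auto simp: split_beta intro!: integral_mono integrable_measure_pmf_finite finite_set_pmf_traj)
qed

lemma ret_snoc: "ret r (h @ [(s, a)]) s' = ret r h s + r s a s'"
  by (induction r h s rule: ret.induct) auto

lemma traj_sd_policy_closed_set:
  assumes "set_pmf mu \<subseteq> W" and "\<And>s. s \<in> W \<Longrightarrow> set_pmf (p s (d s)) \<subseteq> W"
  shows "x \<in> set_pmf (traj p mu (sd_policy d) n) \<Longrightarrow> snd x \<in> W"
proof (induction n arbitrary: x)
  case 0
  then show ?case using assms(1) by auto
next
  case (Suc n)
  then obtain h s where "(h, s) \<in> set_pmf (traj p mu (sd_policy d) n)" "snd x \<in> set_pmf (p s (d s))"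
    by (auto simp: sd_policy_def split_beta)
  then show ?case
    using Suc.IH assms(2) by force
qed

section \<open>Survival probabilities\<close>

definition survival :: "('s \<Rightarrow> 'a \<Rightarrow> 's pmf) \<Rightarrow> 's \<Rightarrow> 's pmf \<Rightarrow> ('s, 'a) hr_policy \<Rightarrow> nat \<Rightarrow> real"
  where "survival p e mu pol n = measure_pmf.expectation (traj p mu pol n) (\<lambda>x. of_bool (snd x \<noteq> e))"

lemma survival_le_one:
  fixes p :: "'s::finite \<Rightarrow> 'a::finite \<Rightarrow> 's pmf"
  shows "survival p e mu pol n \<le> 1"
proof -
  have "survival p e mu pol n \<le> measure_pmf.expectation (traj p mu pol n) (\<lambda>_. 1)"
    unfolding survival_def
    by (intro integral_mono integrable_measure_pmf_finite finite_set_pmf_traj) auto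
  then show ?thesis by simp
qed

fun max_survival :: "('s \<Rightarrow> 'a::finite \<Rightarrow> 's pmf) \<Rightarrow> 's \<Rightarrow> nat \<Rightarrow> 's \<Rightarrow> real" where
  "max_survival p e 0 s = of_bool (s \<noteq> e)"
| "max_survival p e (Suc n) s = (if s = e then 0
     else Max (range (\<lambda>a. measure_pmf.expectation (p s a) (max_survival p e n))))"

lemma max_survival_sink [simp]: "max_survival p e n e = 0"
  by (cases n) auto

lemma max_survival_bounds:
  fixes p :: "'s::finite \<Rightarrow> 'a::finite \<Rightarrow> 's pmf"
  shows "0 \<le> max_survival p e n s \<and> max_survival p e n s \<le> 1"
proof (induction n arbitrary: s)
  case 0
  then show ?case by simp
next
  case (Suc n)
  let ?F = "\<lambda>a. measure_pmf.expectation (p s a) (max_survival p e n)"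
  have "Max (range ?F) \<in> range ?F"
    by (rule Max_in) auto
  then obtain a where "Max (range ?F) = ?F a"
    by blast
  then have a: "max_survival p e (Suc n) s = (if s = e then 0 else ?F a)"
    by simp
  have "?F a \<le> measure_pmf.expectation (p s a) (\<lambda>_. 1)"
    using Suc by (intro integral_mono integrable_measure_pmf_finite) auto
  moreover have "0 \<le> ?F a"
    using Suc by (simp add: integral_nonneg_AE)
  ultimately show ?case
    unfolding a by simp
qed

text \<open>\<open>safe_states p e k\<close> is the set of states from which some policy stays outside \<open>e\<close>
  with certainty during \<open>k\<close> steps.\<close>

fun safe_states :: "('s \<Rightarrow> 'a \<Rightarrow> 's pmf) \<Rightarrow> 's \<Rightarrow> nat \<Rightarrow> 's set" where
  "safe_states p e 0 = - {e}"
| "safe_states p e (Suc k) = {s \<in> safe_states p e k. \<exists>a. set_pmf (p s a) \<subseteq> safe_states p e k}"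

lemma safe_states_Suc_subset: "safe_states p e (Suc k) \<subseteq> safe_states p e k"
  by auto

lemma max_survival_outside_safe_states:
  fixes p :: "'s::finite \<Rightarrow> 'a::finite \<Rightarrow> 's pmf"
  assumes "0 < \<delta>" "\<delta> \<le> 1" and \<delta>: "\<And>s a s'. s' \<in> set_pmf (p s a) \<Longrightarrow> \<delta> \<le> pmf (p s a) s'"
  shows "s \<notin> safe_states p e k \<Longrightarrow> k \<le> j \<Longrightarrow> max_survival p e j s \<le> 1 - \<delta> ^ k"
proof (induction k arbitrary: s j)
  case 0
  then show ?case by simp
next
  case (Suc k)
  show ?case
  proof (cases "s \<in> safe_states p e k")
    case False
    then have "max_survival p e j s \<le> 1 - \<delta> ^ k"
      using Suc by simp
    moreover have "\<delta> ^ Suc k \<le> \<delta> ^ k"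
      using assms by (simp add: power_decreasing)
    ultimately show ?thesis by simp
  next
    case True
    then have "s \<noteq> e"
      by (induction k) auto
    obtain j' where j: "j = Suc j'" and "k \<le> j'"
      using Suc.prems(2) by (cases j) auto
    have "measure_pmf.expectation (p s a) (max_survival p e j') \<le> 1 - \<delta> ^ Suc k" for a
    proof -
      obtain s'' where s'': "s'' \<in> set_pmf (p s a)" "s'' \<notin> safe_states p e k"
        using True Suc.prems(1) by auto
      have "max_survival p e j' x \<le> 1 - \<delta> ^ k * indicator {s''} x" for x
        using Suc.IH[OF s''(2) \<open>k \<le> j'\<close>] max_survival_bounds[of p e j' x] by (auto split: split_indicator)
      then have "measure_pmf.expectation (p s a) (max_survival p e j')
          \<le> measure_pmf.expectation (p s a) (\<lambda>x. 1 - \<delta> ^ k * indicator {s''} x)"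
        by (intro integral_mono integrable_measure_pmf_finite) auto
      also have "\<dots> = 1 - \<delta> ^ k * pmf (p s a) s''"
        by (simp add: integrable_measure_pmf_finite measure_pmf_single)
      also have "\<dots> \<le> 1 - \<delta> ^ k * \<delta>"
        using \<delta>[OF s''(1)] assms by simp
      finally show ?thesis by (simp add: mult.commute)
    qed
    then show ?thesis
      using \<open>s \<noteq> e\<close> by (simp add: j)
  qed
qed

definition nonsink_steps :: "'s \<Rightarrow> ('s \<times> 'a) list \<Rightarrow> nat" where
  "nonsink_steps e h = length (filter (\<lambda>x. fst x \<noteq> e) h)"

lemma nonsink_steps_snoc:
  "nonsink_steps e (h @ [(s, a)]) = (if s \<noteq> e then Suc (nonsink_steps e h) else nonsink_steps e h)"
  by (simp add: nonsink_steps_def)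

lemma expectation_pow_nonsink_steps_le:
  fixes p :: "'s::finite \<Rightarrow> 'a::finite \<Rightarrow> 's pmf" and l :: real
  assumes "1 \<le> l"
  shows "measure_pmf.expectation (traj p mu pol n) (\<lambda>x. l ^ nonsink_steps e (fst x))
     \<le> 1 + (l - 1) * (\<Sum>k<n. l ^ k * survival p e mu pol k)"
proof (induction n)
  case 0
  then show ?case by (simp add: nonsink_steps_def)
next
  case (Suc n)
  let ?E = "measure_pmf.expectation (traj p mu pol n)"
  have "measure_pmf.expectation (traj p mu pol (Suc n)) (\<lambda>x. l ^ nonsink_steps e (fst x))
      = ?E (\<lambda>x. l ^ nonsink_steps e (fst x) * (if snd x \<noteq> e then l else 1))"
    unfolding expectation_traj_Suc
    by (intro Bochner_Integration.integral_cong) (auto simp: nonsink_steps_snoc)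
  also have "\<dots> \<le> ?E (\<lambda>x. l ^ nonsink_steps e (fst x) + (l - 1) * l ^ n * of_bool (snd x \<noteq> e))"
  proof (intro integral_mono_AE integrable_measure_pmf_finite finite_set_pmf_traj AE_pmfI)
    fix x assume "x \<in> set_pmf (traj p mu pol n)"
    then have "nonsink_steps e (fst x) \<le> n"
      by (metis length_traj length_filter_le nonsink_steps_def)
    then have "l ^ nonsink_steps e (fst x) \<le> l ^ n"
      using assms by (intro power_increasing)
    show "l ^ nonsink_steps e (fst x) * (if snd x \<noteq> e then l else 1)
        \<le> l ^ nonsink_steps e (fst x) + (l - 1) * l ^ n * of_bool (snd x \<noteq> e)"
    proof -
      have "(l - 1) * l ^ nonsink_steps e (fst x) \<le> (l - 1) * l ^ n"
        using assms \<open>l ^ nonsink_steps e (fst x) \<le> l ^ n\<close> by (intro mult_left_mono) auto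
      then show ?thesis
        by (cases "snd x = e") (simp_all add: left_diff_distrib mult.commute)
    qed
  qed
  also have "\<dots> = ?E (\<lambda>x. l ^ nonsink_steps e (fst x)) + (l - 1) * l ^ n * survival p e mu pol n"
    unfolding survival_def
    by (simp add: integrable_measure_pmf_finite finite_set_pmf_traj)
  also have "\<dots> \<le> 1 + (l - 1) * (\<Sum>k<Suc n. l ^ k * survival p e mu pol k)"
    using Suc by (simp add: distrib_left mult.assoc)
  finally show ?case .
qed

locale absorbing_mdp =
  fixes p :: "'s::finite \<Rightarrow> 'a::finite \<Rightarrow> 's pmf" and e :: 's
  assumes sink: "p e a = return_pmf e"
begin

lemma expectation_max_survival_le:
  "measure_pmf.expectation (p s a) (max_survival p e n) \<le> max_survival p e (Suc n) s"
  by (auto simp: sink intro: Max_ge)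

lemma survival_add_le:
  "survival p e mu pol (m + n)
    \<le> measure_pmf.expectation (traj p mu pol m) (\<lambda>x. max_survival p e n (snd x))"
proof (induction n arbitrary: m)
  case 0
  then show ?case by (simp add: survival_def)
next
  case (Suc n)
  have "survival p e mu pol (m + Suc n) = survival p e mu pol (Suc m + n)"
    by simp
  also have "\<dots> \<le> measure_pmf.expectation (traj p mu pol (Suc m)) (\<lambda>x. max_survival p e n (snd x))"
    by (rule Suc)
  also have "\<dots> \<le> measure_pmf.expectation (traj p mu pol m) (\<lambda>x. max_survival p e (Suc n) (snd x))"
    by (intro expectation_traj_Suc_state_le expectation_max_survival_le)
  finally show ?case .
qed

lemma abs_ret_le_nonsink_steps:
  assumes sink_rew: "\<And>a. r e a e = 0"
    and R: "\<And>s a s'. \<bar>r s a s'\<bar> \<le> R"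
  shows "x \<in> set_pmf (traj p mu pol n) \<Longrightarrow> \<bar>ret r (fst x) (snd x)\<bar> \<le> R * real (nonsink_steps e (fst x))"
proof (induction n arbitrary: x)
  case 0
  then show ?case by (auto simp: nonsink_steps_def)
next
  case (Suc n)
  then obtain h s a s' where hs: "(h, s) \<in> set_pmf (traj p mu pol n)"
    and s': "s' \<in> set_pmf (p s a)" and x: "x = (h @ [(s, a)], s')"
    by (auto simp: split_beta)
  have "\<bar>r s a s'\<bar> \<le> (if s \<noteq> e then R else 0)"
    using s' sink sink_rew R by auto
  then show ?case
    using Suc.IH[OF hs] by (auto simp: x ret_snoc nonsink_steps_snoc distrib_left abs_triangle_ineq[THEN order_trans])
qed

end

locale transient_mdp = absorbing_mdp +
  assumes transient: "s \<noteq> e \<Longrightarrow> s' \<noteq> e \<Longrightarrow>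
    summable (\<lambda>n. measure_pmf.prob (traj p (return_pmf s) (sd_policy d) n) {x. snd x = s'})"
begin

lemma safe_states_eventually_empty:
  obtains k where "safe_states p e k = {}"
proof -
  obtain k where "(safe_states p e (Suc k), safe_states p e k) \<notin> finite_psubset"
    using wf_no_infinite_down_chainE[OF wf_finite_psubset] by blast
  then have stable: "safe_states p e (Suc k) = safe_states p e k"
    using safe_states_Suc_subset[of p e k] by (auto simp: finite_psubset_def)
  define W where "W = safe_states p e k"
  have closed: "\<exists>a. set_pmf (p s a) \<subseteq> W" if "s \<in> W" for s
    using that stable by (simp add: W_def) blast
  have "W \<subseteq> - {e}"
    unfolding W_def by (induction k) auto
  have "W = {}"
  proof (rule ccontr)
    assume "W \<noteq> {}"
    then obtain s0 where "s0 \<in> W" by blast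
    define d where "d s = (SOME a. set_pmf (p s a) \<subseteq> W)" for s
    have "set_pmf (p s (d s)) \<subseteq> W" if "s \<in> W" for s
      unfolding d_def using closed[OF that] by (rule someI_ex)
    with \<open>s0 \<in> W\<close> have "snd x \<in> W" if "x \<in> set_pmf (traj p (return_pmf s0) (sd_policy d) n)" for n x
      using that by (intro traj_sd_policy_closed_set[where W = W]) auto
    then have "(\<Sum>s'\<in>W. pmf (map_pmf snd (traj p (return_pmf s0) (sd_policy d) n)) s') = 1" for n
      by (intro sum_pmf_eq_1) auto
    then have one: "(\<Sum>s'\<in>W. measure_pmf.prob (traj p (return_pmf s0) (sd_policy d) n) {x. snd x = s'}) = 1"
      for n
      by (simp add: pmf_map vimage_def)
    have "summable (\<lambda>n. \<Sum>s'\<in>W. measure_pmf.prob (traj p (return_pmf s0) (sd_policy d) n) {x. snd x = s'})"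
      using \<open>s0 \<in> W\<close> \<open>W \<subseteq> - {e}\<close> by (intro summable_sum transient) auto
    then show False
      by (simp add: one summable_const_iff)
  qed
  then show thesis
    using that W_def by blast
qed

lemma max_survival_contraction:
  obtains \<theta> K where "0 < \<theta>" "\<theta> < 1" "0 < K" "\<And>s. max_survival p e K s \<le> \<theta> * of_bool (s \<noteq> e)"
proof -
  obtain \<delta> where "0 < \<delta>" "\<delta> < 1"
    and \<delta>_le: "\<forall>x. 0 < (\<lambda>(s, a, s'). pmf (p s a) s') x \<longrightarrow> \<delta> \<le> (\<lambda>(s, a, s'). pmf (p s a) s') x"
    using finite_positive_lower_bound[of "\<lambda>(s, a, s'). pmf (p s a) s'"] by blast
  have \<delta>: "\<delta> \<le> pmf (p s a) s'" if "s' \<in> set_pmf (p s a)" for s a s'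
    using \<delta>_le that by (auto simp: pmf_positive)
  obtain k where "safe_states p e k = {}"
    using safe_states_eventually_empty by blast
  define K where "K = Suc k"
  then have "safe_states p e K = {}"
    unfolding K_def using \<open>safe_states p e k = {}\<close> safe_states_Suc_subset by (metis subset_empty)
  have "0 < \<delta> ^ K" "\<delta> ^ K < 1"
    using \<open>0 < \<delta>\<close> \<open>\<delta> < 1\<close> power_Suc_less_one[of \<delta> k] by (simp_all add: K_def del: power_Suc)
  moreover have "max_survival p e K s \<le> (1 - \<delta> ^ K) * of_bool (s \<noteq> e)" for s
  proof (cases "s = e")
    case False
    have "max_survival p e K s \<le> 1 - \<delta> ^ K"
      by (rule max_survival_outside_safe_states)
        (use \<open>0 < \<delta>\<close> \<open>\<delta> < 1\<close> \<delta> \<open>safe_states p e K = {}\<close> in auto)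
    with False show ?thesis
      by simp
  qed simp
  ultimately show thesis
    using that[of "1 - \<delta> ^ K" K] by (simp add: K_def)
qed

lemma survival_le_power_div:
  obtains \<theta> K where "0 < \<theta>" "\<theta> < 1" "0 < K" "\<And>mu pol n. survival p e mu pol n \<le> \<theta> ^ (n div K)"
proof -
  obtain \<theta> K where "0 < \<theta>" "\<theta> < 1" "0 < K"
    and contraction: "\<And>s. max_survival p e K s \<le> \<theta> * of_bool (s \<noteq> e)"
    using max_survival_contraction by blast
  have step: "survival p e mu pol (m + K) \<le> \<theta> * survival p e mu pol m" for mu pol m
  proof -
    have "survival p e mu pol (m + K)
        \<le> measure_pmf.expectation (traj p mu pol m) (\<lambda>x. max_survival p e K (snd x))"
      by (rule survival_add_le)
    also have "\<dots> \<le> measure_pmf.expectation (traj p mu pol m) (\<lambda>x. \<theta> * of_bool (snd x \<noteq> e))"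
      by (intro integral_mono integrable_measure_pmf_finite finite_set_pmf_traj contraction)
    finally show ?thesis
      by (simp add: survival_def)
  qed
  have geometric: "survival p e mu pol (j * K + i) \<le> \<theta> ^ j" for mu pol j i
  proof (induction j)
    case 0
    then show ?case by (simp add: survival_le_one)
  next
    case (Suc j)
    have "Suc j * K + i = (j * K + i) + K"
      by simp
    then have "survival p e mu pol (Suc j * K + i) \<le> \<theta> * survival p e mu pol (j * K + i)"
      using step[of mu pol "j * K + i"] by (simp only:)
    also have "\<dots> \<le> \<theta> * \<theta> ^ j"
      using Suc \<open>0 < \<theta>\<close> by simp
    finally show ?case by simp
  qed
  show thesis
  proof
    show "survival p e mu pol n \<le> \<theta> ^ (n div K)" for mu pol n
      using geometric[of mu pol "n div K" "n mod K"] by simp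
  qed fact+
qed

lemma survival_exponential_decay:
  obtains C \<rho> where "0 < C" "0 < \<rho>" "\<rho> < 1" "\<And>mu pol n. survival p e mu pol n \<le> C * \<rho> ^ n"
proof -
  obtain \<theta> K where "0 < \<theta>" "\<theta> < 1" "0 < K"
    and decay: "\<And>mu pol n. survival p e mu pol n \<le> \<theta> ^ (n div K)"
    using survival_le_power_div by blast
  show thesis
  proof
    show "survival p e mu pol n \<le> 1 / \<theta> * root K \<theta> ^ n" for mu pol n
      using decay[of mu pol n] power_div_le_root_power[OF \<open>0 < \<theta>\<close> less_imp_le[OF \<open>\<theta> < 1\<close>] \<open>0 < K\<close>]
      by (rule order_trans)
  qed (use \<open>0 < \<theta>\<close> \<open>\<theta> < 1\<close> \<open>0 < K\<close> in auto)
qed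

lemma bounded_exponential_moment:
  obtains l M :: real where "1 < l"
    "\<And>mu pol n. measure_pmf.expectation (traj p mu pol n) (\<lambda>x. l ^ nonsink_steps e (fst x)) \<le> M"
proof -
  obtain C \<rho> where "0 < C" "0 < \<rho>" "\<rho> < 1"
    and decay: "\<And>mu pol n. survival p e mu pol n \<le> C * \<rho> ^ n"
    using survival_exponential_decay by blast
  define \<sigma> where "\<sigma> = sqrt \<rho>"
  define l where "l = 1 / \<sigma>"
  have "0 < \<sigma>" "\<sigma> < 1" "1 < l" and \<rho>: "\<rho> = \<sigma> * \<sigma>"
    using \<open>0 < \<rho>\<close> \<open>\<rho> < 1\<close> by (simp_all add: \<sigma>_def l_def)
  have weighted_decay: "l ^ k * survival p e mu pol k \<le> C * \<sigma> ^ k" for mu pol k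
  proof -
    have "l ^ k * survival p e mu pol k \<le> l ^ k * (C * \<rho> ^ k)"
      using decay \<open>1 < l\<close> by (intro mult_left_mono) auto
    also have "\<dots> = C * \<sigma> ^ k"
      using \<open>0 < \<sigma>\<close> by (simp add: \<rho> l_def power_divide power_mult_distrib)
    finally show ?thesis .
  qed
  have geometric_sum: "(\<Sum>k<n. \<sigma> ^ k) \<le> 1 / (1 - \<sigma>)" for n
    using \<open>0 < \<sigma>\<close> \<open>\<sigma> < 1\<close> by (simp add: sum_gp_strict divide_right_mono)
  have bound: "measure_pmf.expectation (traj p mu pol n) (\<lambda>x. l ^ nonsink_steps e (fst x))
      \<le> 1 + (l - 1) * (C * (1 / (1 - \<sigma>)))" for mu pol n
  proof -
    have "measure_pmf.expectation (traj p mu pol n) (\<lambda>x. l ^ nonsink_steps e (fst x))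
        \<le> 1 + (l - 1) * (\<Sum>k<n. l ^ k * survival p e mu pol k)"
      using \<open>1 < l\<close> by (intro expectation_pow_nonsink_steps_le) simp
    also have "\<dots> \<le> 1 + (l - 1) * (C * (\<Sum>k<n. \<sigma> ^ k))"
      using \<open>1 < l\<close> by (simp add: sum_distrib_left sum_mono weighted_decay)
    also have "\<dots> \<le> 1 + (l - 1) * (C * (1 / (1 - \<sigma>)))"
      using \<open>1 < l\<close> \<open>0 < C\<close> geometric_sum[of n] by (intro add_left_mono mult_left_mono) auto
    finally show ?thesis .
  qed
  with \<open>1 < l\<close> show thesis
    using that by blast
qed

lemma ret_moment_bounds:
  assumes sink_rew: "\<And>a. r e a e = 0"
  obtains A C \<beta>\<^sub>0 where "0 < \<beta>\<^sub>0"
    "\<And>mu pol n. measure_pmf.expectation (traj p mu pol n) (\<lambda>x. \<bar>ret r (fst x) (snd x)\<bar>) \<le> A"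
    "\<And>mu pol n \<beta>. 0 \<le> \<beta> \<Longrightarrow> \<beta> \<le> \<beta>\<^sub>0 \<Longrightarrow> measure_pmf.expectation (traj p mu pol n)
       (\<lambda>x. (ret r (fst x) (snd x))\<^sup>2 * exp (\<beta> * \<bar>ret r (fst x) (snd x)\<bar>)) \<le> C"
proof -
  obtain l M :: real where "1 < l" and moment:
    "\<And>mu pol n. measure_pmf.expectation (traj p mu pol n) (\<lambda>x. l ^ nonsink_steps e (fst x)) \<le> M"
    using bounded_exponential_moment by blast
  define c where "c = ln l"
  have "0 < c"
    using \<open>1 < l\<close> by (simp add: c_def)
  have pow_eq_exp: "l ^ k = exp (c * real k)" for k
    using \<open>1 < l\<close> by (simp add: c_def mult.commute exp_of_nat_mult)
  have E_le_moment: "measure_pmf.expectation (traj p mu pol n) f \<le> K * M"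
    if "0 \<le> K" and f: "\<And>x. x \<in> set_pmf (traj p mu pol n) \<Longrightarrow>
        f x \<le> K * exp (c * real (nonsink_steps e (fst x)))" for f K mu pol n
  proof -
    have "measure_pmf.expectation (traj p mu pol n) f
        \<le> measure_pmf.expectation (traj p mu pol n) (\<lambda>x. K * l ^ nonsink_steps e (fst x))"
      using f by (intro integral_mono_AE integrable_measure_pmf_finite finite_set_pmf_traj AE_pmfI)
        (simp add: pow_eq_exp)
    also have "\<dots> \<le> K * M"
      using moment \<open>0 \<le> K\<close> by (simp add: mult_left_mono)
    finally show ?thesis .
  qed
  obtain R where "0 < R" and R_bound: "\<And>x. \<bar>(\<lambda>(s, a, s'). r s a s') x\<bar> \<le> R"
    using finite_abs_bound[of "\<lambda>(s, a, s'). r s a s'"] by blast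
  have R: "\<bar>r s a s'\<bar> \<le> R" for s a s'
    using R_bound[of "(s, a, s')"] by simp
  note ret_le = abs_ret_le_nonsink_steps[where r = r, OF sink_rew R]
  show thesis
  proof
    show "0 < c / (2 * R)"
      using \<open>0 < c\<close> \<open>0 < R\<close> by simp
    show "measure_pmf.expectation (traj p mu pol n) (\<lambda>x. \<bar>ret r (fst x) (snd x)\<bar>) \<le> R / c * M"
      for mu pol n
      using ret_le \<open>0 < R\<close> \<open>0 < c\<close> by (intro E_le_moment abs_le_scaled_exp) auto
    show "measure_pmf.expectation (traj p mu pol n)
        (\<lambda>x. (ret r (fst x) (snd x))\<^sup>2 * exp (\<beta> * \<bar>ret r (fst x) (snd x)\<bar>)) \<le> 16 * R\<^sup>2 / c\<^sup>2 * M"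
      if "0 \<le> \<beta>" "\<beta> \<le> c / (2 * R)" for mu pol n \<beta>
    proof (rule E_le_moment)
      have "\<beta> * R \<le> c / 2"
        using that \<open>0 < R\<close> by (simp add: field_simps)
      then show "(ret r (fst x) (snd x))\<^sup>2 * exp (\<beta> * \<bar>ret r (fst x) (snd x)\<bar>)
          \<le> 16 * R\<^sup>2 / c\<^sup>2 * exp (c * real (nonsink_steps e (fst x)))"
        if "x \<in> set_pmf (traj p mu pol n)" for x
        using ret_le[OF that] \<open>0 < R\<close> \<open>0 < c\<close> \<open>0 \<le> \<beta>\<close>
        by (intro square_mult_exp_le_scaled_exp) auto
    qed simp
  qed
qed

lemma g_uniform_sandwich:
  assumes sink_rew: "\<And>a. r e a e = 0"
  obtains B C \<beta>\<^sub>0 where "0 < \<beta>\<^sub>0" "\<And>t pol. \<bar>g p r mu t pol 0\<bar> \<le> B"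
    "\<And>t pol \<beta>. 0 < \<beta> \<Longrightarrow> \<beta> \<le> \<beta>\<^sub>0 \<Longrightarrow>
       g p r mu t pol 0 - \<beta> * C \<le> g p r mu t pol \<beta> \<and> g p r mu t pol \<beta> \<le> g p r mu t pol 0"
proof (rule ret_moment_bounds[where r = r, OF sink_rew])
  fix A C \<beta>\<^sub>0
  assume "0 < \<beta>\<^sub>0"
    and first: "\<And>mu pol n. measure_pmf.expectation (traj p mu pol n) (\<lambda>x. \<bar>ret r (fst x) (snd x)\<bar>) \<le> A"
    and second: "\<And>mu pol n \<beta>. 0 \<le> \<beta> \<Longrightarrow> \<beta> \<le> \<beta>\<^sub>0 \<Longrightarrow> measure_pmf.expectation (traj p mu pol n)
       (\<lambda>x. (ret r (fst x) (snd x))\<^sup>2 * exp (\<beta> * \<bar>ret r (fst x) (snd x)\<bar>)) \<le> C"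
  let ?X = "\<lambda>t pol. map_pmf (\<lambda>x. ret r (fst x) (snd x)) (traj p mu pol (Suc t))"
  have g_eq: "g p r mu t pol \<beta> = ERM \<beta> (?X t pol)" for t pol \<beta>
    by (simp add: g_def case_prod_beta')
  have g_0: "g p r mu t pol 0 = measure_pmf.expectation (?X t pol) (\<lambda>x. x)" for t pol
    by (simp only: g_eq ERM_def refl if_True)
  have fin: "finite (set_pmf (?X t pol))" for t pol
    unfolding set_map_pmf by (intro finite_imageI finite_set_pmf_traj)
  have "\<bar>g p r mu t pol 0\<bar> \<le> A" for t pol
    unfolding g_0 integral_map_pmf by (rule order_trans[OF integral_abs_bound first])
  moreover have "g p r mu t pol 0 - \<beta> * C \<le> g p r mu t pol \<beta> \<and> g p r mu t pol \<beta> \<le> g p r mu t pol 0"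
    if "0 < \<beta>" "\<beta> \<le> \<beta>\<^sub>0" for t pol \<beta>
  proof
    have "measure_pmf.expectation (?X t pol) (\<lambda>x. x\<^sup>2 * exp (\<beta> * \<bar>x\<bar>)) \<le> C"
      using second[OF less_imp_le[OF \<open>0 < \<beta>\<close>] \<open>\<beta> \<le> \<beta>\<^sub>0\<close>, of mu pol "Suc t"]
      by (simp only: integral_map_pmf)
    then have "measure_pmf.expectation (?X t pol) (\<lambda>x. x) - \<beta> * C \<le> ERM \<beta> (?X t pol)"
      by (rule expectation_minus_le_ERM[OF fin \<open>0 < \<beta>\<close>])
    then show "g p r mu t pol 0 - \<beta> * C \<le> g p r mu t pol \<beta>"
      unfolding g_0 by (simp only: g_eq)
    show "g p r mu t pol \<beta> \<le> g p r mu t pol 0"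
      unfolding g_0 using ERM_le_expectation[OF fin \<open>0 < \<beta>\<close>] by (simp only: g_eq)
  qed
  ultimately show thesis
    using that \<open>0 < \<beta>\<^sub>0\<close> by blast
qed

end

theorem lemma10:
  fixes p :: "'s::finite \<Rightarrow> 'a::finite \<Rightarrow> 's pmf"
    and r :: "'s \<Rightarrow> 'a \<Rightarrow> 's \<Rightarrow> real"
    and mu :: "'s pmf"
    and e :: 's
    and d :: "'s \<Rightarrow> 'a"
    and t :: nat
  assumes sink_trans: "\<And>a. p e a = return_pmf e"
    and sink_rew: "\<And>a. r e a e = 0"
    and mu_sink: "pmf mu e = 0"
    and mu_pos: "\<And>s. s \<noteq> e \<Longrightarrow> pmf mu s > 0"
    and transient: "\<And>d' s s'. s \<noteq> e \<Longrightarrow> s' \<noteq> e \<Longrightarrow>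
        summable (\<lambda>n. measure_pmf.prob (traj p (return_pmf s) (sd_policy d') n)
                                         {x. snd x = s'})"
  shows "((\<lambda>\<beta>. g p r mu t (sd_policy d) \<beta>) \<longlongrightarrow> g p r mu t (sd_policy d) 0) (at_right 0) \<and>
         ((\<lambda>\<beta>. g_star p r mu t \<beta>) \<longlongrightarrow> g_star p r mu t 0) (at_right 0) \<and>
         ((\<lambda>\<beta>. g_inf p r mu (sd_policy d) \<beta>) \<longlongrightarrow> g_inf p r mu (sd_policy d) 0) (at_right 0) \<and>
         ((\<lambda>\<beta>. g_star_inf p r mu \<beta>) \<longlongrightarrow> g_star_inf p r mu 0) (at_right 0)"
proof -
  interpret transient_mdp p e
    by unfold_locales (use sink_trans transient in auto)
  show ?thesis
  proof (rule g_uniform_sandwich[where r = r and mu = mu, OF sink_rew])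
    fix B C \<beta>\<^sub>0
    assume "0 < \<beta>\<^sub>0" and bound: "\<And>t pol. \<bar>g p r mu t pol 0\<bar> \<le> B"
      and sandwich: "\<And>t pol \<beta>. 0 < \<beta> \<Longrightarrow> \<beta> \<le> \<beta>\<^sub>0 \<Longrightarrow>
         g p r mu t pol 0 - \<beta> * C \<le> g p r mu t pol \<beta> \<and> g p r mu t pol \<beta> \<le> g p r mu t pol 0"
    have bdd: "bdd_above (range (\<lambda>pol. g p r mu t pol 0))" for t
      using bound by (intro bdd_aboveI2[of _ _ B]) (simp add: abs_le_iff)
    have star_sandwich: "g_star p r mu t 0 - \<beta> * C \<le> g_star p r mu t \<beta> \<and> g_star p r mu t \<beta> \<le> g_star p r mu t 0"
      if "0 < \<beta>" "\<beta> \<le> \<beta>\<^sub>0" for t \<beta>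
    proof -
      have "\<And>pol. g p r mu t pol 0 - \<beta> * C \<le> g p r mu t pol \<beta>" "\<And>pol. g p r mu t pol \<beta> \<le> g p r mu t pol 0"
        using sandwich[OF that] by blast+
      then show ?thesis
        unfolding g_star_def using bdd by (intro conjI cSUP_sandwich)
    qed
    have "((\<lambda>\<beta>. g p r mu t (sd_policy d) \<beta>) \<longlongrightarrow> g p r mu t (sd_policy d) 0) (at_right 0)"
      using \<open>0 < \<beta>\<^sub>0\<close> sandwich by (rule tendsto_at_right_0_real_sandwich)
    moreover have "((\<lambda>\<beta>. g_star p r mu t \<beta>) \<longlongrightarrow> g_star p r mu t 0) (at_right 0)"
      using \<open>0 < \<beta>\<^sub>0\<close> star_sandwich by (rule tendsto_at_right_0_real_sandwich)
    moreover have "((\<lambda>\<beta>. g_inf p r mu (sd_policy d) \<beta>) \<longlongrightarrow> g_inf p r mu (sd_policy d) 0) (at_right 0)"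
      unfolding g_inf_def using \<open>0 < \<beta>\<^sub>0\<close> sandwich by (rule liminf_tendsto_at_right_0_sandwich)
    moreover have "((\<lambda>\<beta>. g_star_inf p r mu \<beta>) \<longlongrightarrow> g_star_inf p r mu 0) (at_right 0)"
      unfolding g_star_inf_def using \<open>0 < \<beta>\<^sub>0\<close> star_sandwich by (rule liminf_tendsto_at_right_0_sandwich)
    ultimately show ?thesis
      by simp
  qed
qed

end
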